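(* Let $\theta=\sqrt{b/a}>1$ with $a,b$ coprime positive integers, $\theta\notin\mathbb{Q}$. Let $\varepsilon>\eta>0$ and suppose the open interval $\,]2\sqrt{ab}\,\theta^{-2}\eta,\ 2\sqrt{ab}\,\theta^{-2}\varepsilon[\,$ contains $|m|$ for some integer $m$ such that the equation $ax^2-by^2=m$ has a primitive integer solution (i.e. with $\gcd(x,y)=1$). Then there exists a sequence $B_n\to\infty$ with $$\delta_{\theta,B_n,1/2}(\chi_{\varepsilon,\eta})\ge1\quad\text{for all }n\ge1.$$
   Context: On $\mathbb{P}^1(\mathbb{Q})$ use $H([u:v])=\max(|u|,|v|)$ with $u,v$ coprime integers. For real $\theta$, $r>0$, $B>0$ and compactly supported $f$ on $\mathbb{R}$, $\delta_{\theta,B,r}(f)=\sum_{[u:v]\in\mathbb{P}^1(\mathbb{Q}),v\ne0,H([u:v])\le B}f(B^{1/r}(u/v-\theta))$. For $\varepsilon>\eta\ge0$, $\chi_{\varepsilon,\eta}$ is the indicator of $\{t:\eta<|t|\le\varepsilon\}$. *)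

theory Defs
  imports "HOL-Analysis.Analysis"
begin

text \<open>Points [u:v] of P^1(Q) with v nonzero are represented uniquely by coprime
integers (u,v) with v > 0; the height is max |u| |v|.\<close>
definition delta :: "real \<Rightarrow> real \<Rightarrow> real \<Rightarrow> (real \<Rightarrow> real) \<Rightarrow> real" where
  "delta \<theta> B r f =
     (\<Sum>(u,v) \<in> {p :: int \<times> int. snd p > 0 \<and> coprime (fst p) (snd p) \<and> real_of_int (max \<bar>fst p\<bar> \<bar>snd p\<bar>) \<le> B}.
        f (B powr (1 / r) * (real_of_int u / real_of_int v - \<theta>)))"

definition chi :: "real \<Rightarrow> real \<Rightarrow> real \<Rightarrow> real" where
  "chi \<epsilon> \<eta> t = (if \<eta> < \<bar>t\<bar> \<and> \<bar>t\<bar> \<le> \<epsilon> then 1 else 0)"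

end

theory Submission
  imports Defs
begin

text \<open>
  A solution of Pell's equation \<open>p\<^sup>2 - ab q\<^sup>2 = 1\<close> acts on the primitive solutions of
  \<open>ax\<^sup>2 - by\<^sup>2 = m\<close> by \<open>(x, y) \<mapsto> (px + bqy, aqx + py)\<close>, so the given primitive solution
  generates infinitely many, with \<open>y \<rightarrow> \<infinity>\<close>. For each of them
  \<open>x/y - \<theta> = m / (a y\<^sup>2 (x/y + \<theta>))\<close>, hence the squared height times the error,
  \<open>max(x, y)\<^sup>2 \<bar>x/y - \<theta>\<bar>\<close>, tends to \<open>\<theta>\<bar>m\<bar>/(2a) = \<bar>m\<bar>/(2\<surd>(ab) \<theta>\<^sup>-\<^sup>2)\<close>, which is \<open>< \<epsilon>\<close>.
  Choosing \<open>B\<close> with \<open>B\<^sup>2 \<bar>x/y - \<theta>\<bar> = \<epsilon>\<close> then puts \<open>x/y\<close> inside the height bound and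
  on the boundary \<open>\<bar>t\<bar> = \<epsilon>\<close> of the support of \<open>\<chi>\<^sub>\<epsilon>\<^sub>,\<^sub>\<eta>\<close>.
\<close>

section \<open>Pell's equation\<close>

lemma brahmagupta_identity:
  fixes h1 h2 k1 k2 D :: "'a::comm_ring_1"
  shows "(h1*h2 - D*k1*k2)^2 - D*(h1*k2 - h2*k1)^2 = (h1^2 - D*k1^2) * (h2^2 - D*k2^2)"
  by (simp add: algebra_simps power2_eq_square)

lemma approx_set_sqrt_norm_bound:
  fixes D h k :: int
  assumes "D > 0" and "(h, k) \<in> approx_set (sqrt D)"
  shows "\<bar>h^2 - D*k^2\<bar> \<le> \<lceil>2 * sqrt D + 1\<rceil>"
proof -
  let ?s = "sqrt (real_of_int D)"
  have k: "k > 0" and close: "\<bar>?s - h/k\<bar> < 1/k^2"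
    using assms(2) by (auto simp: approx_set_def)
  have minus: "\<bar>h - k*?s\<bar> < 1/k"
  proof -
    have "\<bar>h - k*?s\<bar> = k * \<bar>?s - h/k\<bar>"
      using k by (simp add: field_simps abs_mult[symmetric] abs_minus_commute)
    also have "\<dots> < k * (1/k^2)"
      using close k by (intro mult_strict_left_mono) auto
    finally show ?thesis using k by (simp add: power2_eq_square)
  qed
  have plus: "\<bar>h + k*?s\<bar> \<le> 2*k*?s + 1/k"
  proof -
    have "\<bar>h + k*?s\<bar> \<le> \<bar>h - k*?s\<bar> + \<bar>2*k*?s\<bar>"
      using abs_triangle_ineq[of "h - k*?s" "2*k*?s"] by simp
    then show ?thesis using minus k assms(1) by simp
  qed
  have "real_of_int \<bar>h^2 - D*k^2\<bar> = \<bar>h - k*?s\<bar> * \<bar>h + k*?s\<bar>"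
    using assms(1) by (simp add: abs_mult[symmetric] algebra_simps power2_eq_square)
  also have "\<dots> \<le> (1/k) * (2*k*?s + 1/k)"
    using minus plus k by (intro mult_mono) auto
  also have "\<dots> = 2*?s + 1/k^2"
    using k by (simp add: field_simps power2_eq_square)
  also have "\<dots> \<le> 2*?s + 1"
    using k by (simp add: power_le_one_iff)
  finally show ?thesis by linarith
qed

lemma coprime_fraction_eq:
  fixes h1 k1 h2 k2 :: int
  assumes "k1 > 0" "coprime h1 k1" "k2 > 0" "coprime h2 k2" and "h1 * k2 = h2 * k1"
  shows "h1 = h2 \<and> k1 = k2"
proof -
  have "k1 dvd k2"
    using assms(2,5) by (metis coprime_commute coprime_dvd_mult_right_iff dvd_triv_right)
  moreover have "k2 dvd k1"
    using assms(4,5) by (metis coprime_commute coprime_dvd_mult_right_iff dvd_triv_right)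
  ultimately have "k1 = k2"
    using assms(1,3) by (simp add: zdvd_antisym_nonneg)
  then show ?thesis using assms(1,5) by simp
qed

text \<open>Two distinct elements of the same norm \<open>N\<close>, congruent modulo \<open>N\<close>, have a quotient
  \<open>(h\<^sub>1 + k\<^sub>1\<surd>D)(h\<^sub>2 - k\<^sub>2\<surd>D)/N\<close> that is integral, of norm 1 and irrational.\<close>

lemma pell_solution_of_congruent_pair:
  fixes D N h1 k1 h2 k2 :: int
  assumes norm1: "h1^2 - D*k1^2 = N" and norm2: "h2^2 - D*k2^2 = N" and "N \<noteq> 0"
    and dvd_h: "N dvd h2 - h1" and dvd_k: "N dvd k2 - k1"
    and "k1 > 0" "coprime h1 k1" "k2 > 0" "coprime h2 k2" and "(h1, k1) \<noteq> (h2, k2)"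
  shows "\<exists>p q. p^2 - D*q^2 = 1 \<and> q \<noteq> 0"
proof -
  define P where "P = h1*h2 - D*k1*k2"
  define Q where "Q = h1*k2 - h2*k1"
  have "P = h1*(h2 - h1) - D*k1*(k2 - k1) + N"
    unfolding P_def norm1[symmetric] by (simp add: algebra_simps power2_eq_square)
  then obtain p where p: "P = N*p"
    using dvd_h dvd_k by (metis dvd_add dvd_diff dvd_mult dvd_refl dvdE)
  have "Q = h1*(k2 - k1) - k1*(h2 - h1)"
    unfolding Q_def by (simp add: algebra_simps)
  then obtain q where q: "Q = N*q"
    using dvd_h dvd_k by (metis dvd_diff dvd_mult dvdE)
  have "P^2 - D*Q^2 = N^2"
    using brahmagupta_identity[of h1 h2 D k1 k2] norm1 norm2
    unfolding P_def Q_def by (simp add: power2_eq_square)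
  then have "N^2 * (p^2 - D*q^2) = N^2 * 1"
    unfolding p q by (simp add: algebra_simps power2_eq_square)
  then have "p^2 - D*q^2 = 1" using \<open>N \<noteq> 0\<close> by simp
  moreover have "Q \<noteq> 0"
    using coprime_fraction_eq[of k1 h1 k2 h2] assms(6-10) unfolding Q_def by auto
  then have "q \<noteq> 0" using q by auto
  ultimately show ?thesis by blast
qed

text \<open>Infinitely many good approximations of \<open>\<surd>D\<close> have norm bounded by \<open>2\<surd>D + 1\<close>,
  so by pigeonhole two of them share the norm \<open>N\<close> and their residues modulo \<open>N\<close>.\<close>

lemma pell_solution_exists:
  fixes D :: int
  assumes "D > 0" and irrational: "sqrt D \<notin> \<rat>"
  shows "\<exists>p q. p^2 - D*q^2 = 1 \<and> q \<noteq> 0"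
proof -
  define S where "S = approx_set (sqrt D)"
  define M where "M = \<lceil>2 * sqrt D + 1\<rceil>"
  define norm where "norm = (\<lambda>(h::int, k::int). h^2 - D*k^2)"
  define f where "f = (\<lambda>z. (norm z, fst z mod norm z, snd z mod norm z))"
  have infinite: "infinite S"
    using irrational rational_iff_finite_approx_set unfolding S_def by blast
  have norm_nonzero: "norm z \<noteq> 0" if "z \<in> S" for z
  proof
    obtain h k where z: "z = (h, k)" by fastforce
    have "k > 0" using that z by (auto simp: S_def approx_set_def)
    assume "norm z = 0"
    then have "(\<bar>h\<bar> / k)^2 = real_of_int D"
      using \<open>k > 0\<close> unfolding z norm_def
      by (simp add: power_divide field_simps) (metis of_int_eq_iff of_int_mult of_int_power)
    then have "sqrt D = \<bar>h\<bar> / k"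
      using \<open>k > 0\<close> by (intro real_sqrt_unique) auto
    then show False using irrational by simp
  qed
  have "f ` S \<subseteq> {-M..M} \<times> {-M..M} \<times> {-M..M}"
  proof
    fix w assume "w \<in> f ` S"
    then obtain z where z: "z \<in> S" and w: "w = f z" by blast
    have "\<bar>norm z\<bar> \<le> M"
      using approx_set_sqrt_norm_bound[OF \<open>D > 0\<close>, of "fst z" "snd z"] z
      unfolding S_def M_def norm_def by (simp add: case_prod_beta)
    then show "w \<in> {-M..M} \<times> {-M..M} \<times> {-M..M}"
      using abs_mod_less[OF norm_nonzero[OF z], of "fst z"]
        abs_mod_less[OF norm_nonzero[OF z], of "snd z"]
      unfolding w f_def by auto
  qed
  then have "finite (f ` S)" by (rule finite_subset) auto
  from pigeonhole_infinite[OF infinite this] obtain z1 where z1: "z1 \<in> S"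
    and "infinite {z \<in> S. f z = f z1}" by blast
  then have "infinite ({z \<in> S. f z = f z1} - {z1})" by simp
  then have "{z \<in> S. f z = f z1} - {z1} \<noteq> {}" by (rule infinite_imp_nonempty)
  then obtain z2 where z2: "z2 \<in> S" "f z2 = f z1" "z2 \<noteq> z1" by blast
  obtain h1 k1 h2 k2 where z: "z1 = (h1, k1)" "z2 = (h2, k2)" by fastforce
  show ?thesis
  proof (rule pell_solution_of_congruent_pair)
    show "h1^2 - D*k1^2 = norm z1" "h2^2 - D*k2^2 = norm z1" "norm z1 \<noteq> 0"
      using z z2(2) norm_nonzero[OF z1] unfolding f_def norm_def by auto
    show "norm z1 dvd h2 - h1" "norm z1 dvd k2 - k1"
      using z z2(2) unfolding f_def by (auto simp: mod_eq_dvd_iff)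
    show "k1 > 0" "coprime h1 k1" "k2 > 0" "coprime h2 k2" "(h1, k1) \<noteq> (h2, k2)"
      using z z1 z2 by (auto simp: S_def approx_set_def)
  qed
qed

section \<open>The action of Pell solutions on primitive solutions\<close>

text \<open>The action has determinant \<open>p\<^sup>2 - ab q\<^sup>2 = 1\<close>, so it is invertible over \<open>\<int>\<close>
  and preserves coprimality.\<close>

lemma pell_action_preserves_solution:
  fixes a b p q x y m :: int
  assumes pell: "p^2 - a*b*q^2 = 1" and "coprime x y" and "a*x^2 - b*y^2 = m"
  shows "coprime (p*x + b*q*y) (a*q*x + p*y)"
    and "a*(p*x + b*q*y)^2 - b*(a*q*x + p*y)^2 = m"
proof -
  have "a*(p*x + b*q*y)^2 - b*(a*q*x + p*y)^2 = (p^2 - a*b*q^2) * (a*x^2 - b*y^2)"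
    by (simp add: algebra_simps power2_eq_square)
  then show "a*(p*x + b*q*y)^2 - b*(a*q*x + p*y)^2 = m"
    using pell assms(3) by simp
  have inv_x: "p*(p*x + b*q*y) - b*q*(a*q*x + p*y) = (p^2 - a*b*q^2) * x"
    and inv_y: "p*(a*q*x + p*y) - a*q*(p*x + b*q*y) = (p^2 - a*b*q^2) * y"
    by (simp_all add: algebra_simps power2_eq_square)
  show "coprime (p*x + b*q*y) (a*q*x + p*y)"
  proof (rule coprimeI)
    fix c assume "c dvd p*x + b*q*y" and "c dvd a*q*x + p*y"
    then have "c dvd x" and "c dvd y"
      using inv_x inv_y pell by (metis dvd_diff dvd_mult mult_1)+
    then show "is_unit c" using \<open>coprime x y\<close> coprime_common_divisor by blast
  qed
qed

lemma primitive_solutions_unbounded: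
  fixes a b m x y :: int
  assumes "a > 0" "b > 0" "sqrt (a*b) \<notin> \<rat>" and "coprime x y" "a*x^2 - b*y^2 = m"
  shows "\<exists>X Y :: nat \<Rightarrow> int. \<forall>k. X k \<ge> 0 \<and> Y k > int k \<and> coprime (X k) (Y k)
           \<and> a*(X k)^2 - b*(Y k)^2 = m"
proof -
  obtain p0 q0 where pell0: "p0^2 - (a*b)*q0^2 = 1" "q0 \<noteq> 0"
    using pell_solution_exists[of "a*b"] assms(1-3) by auto
  define p where "p = \<bar>p0\<bar>"
  define q where "q = \<bar>q0\<bar>"
  have pell: "p^2 - a*b*q^2 = 1" and "q \<ge> 1"
    using pell0 unfolding p_def q_def by auto
  have "a*b*q^2 \<ge> 0" using assms(1,2) by simp
  then have "p \<noteq> 0" using pell by auto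
  then have "p \<ge> 1" unfolding p_def by simp
  have "a*q \<ge> 1" "b*q \<ge> 1"
    using \<open>q \<ge> 1\<close> assms(1,2) mult_mono[of 1 a 1 q] mult_mono[of 1 b 1 q] by simp_all
  define step where "step = (\<lambda>(u::int, w::int). (p*u + b*q*w, a*q*u + p*w))"
  have step_grows: "fst (step z) \<ge> fst z + snd z \<and> snd (step z) \<ge> fst z + snd z"
    if "fst z \<ge> 0" "snd z \<ge> 0" for z
    using mult_right_mono[OF \<open>p \<ge> 1\<close> that(1)] mult_right_mono[OF \<open>p \<ge> 1\<close> that(2)]
      mult_right_mono[OF \<open>a*q \<ge> 1\<close> that(1)] mult_right_mono[OF \<open>b*q \<ge> 1\<close> that(2)]
    unfolding step_def by (auto simp: case_prod_beta mult.assoc)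
  define S where "S = (\<lambda>k. (step ^^ k) (\<bar>x\<bar>, \<bar>y\<bar>))"
  have S_Suc: "S (Suc k) = step (S k)" for k unfolding S_def by simp
  have S_inv: "fst (S k) \<ge> 0 \<and> snd (S k) \<ge> 0 \<and> fst (S k) + snd (S k) \<ge> int k + 1
      \<and> coprime (fst (S k)) (snd (S k)) \<and> a*(fst (S k))^2 - b*(snd (S k))^2 = m" for k
  proof (induction k)
    case 0
    have "x \<noteq> 0 \<or> y \<noteq> 0" using \<open>coprime x y\<close> by auto
    then show ?case using assms(4,5) by (auto simp: S_def)
  next
    case (Suc k)
    then show ?case
      using step_grows[of "S k"]
        pell_action_preserves_solution[OF pell, of "fst (S k)" "snd (S k)" m]
      unfolding S_Suc by (auto simp: step_def case_prod_beta)
  qed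
  show ?thesis
  proof (intro exI allI)
    fix k
    show "fst (S (Suc k)) \<ge> 0 \<and> snd (S (Suc k)) > int k \<and> coprime (fst (S (Suc k))) (snd (S (Suc k)))
        \<and> a*(fst (S (Suc k)))^2 - b*(snd (S (Suc k)))^2 = m"
      using S_inv[of k] S_inv[of "Suc k"] step_grows[of "S k"] unfolding S_Suc by auto
  qed
qed

section \<open>Solutions as rational approximations of \<open>\<surd>(b/a)\<close>\<close>

lemma solution_ratio_error:
  fixes a b m x y \<theta> :: real
  assumes "a > 0" "b > 0" "\<theta> = sqrt (b/a)" and "a*x^2 - b*y^2 = m" "y > 0" "x \<ge> 0"
  shows "x/y - \<theta> = m / (a*y^2*(x/y + \<theta>))"
proof -
  have "\<theta> > 0" "a*\<theta>^2 = b" using assms(1-3) by simp_all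
  then have form: "a*(x - \<theta>*y)*(x + \<theta>*y) = m"
    using assms(1,4) by (simp add: algebra_simps power2_eq_square)
  have "x + \<theta>*y > 0" using \<open>\<theta> > 0\<close> assms(5,6) by (simp add: add_nonneg_pos)
  then have "a*(x + \<theta>*y) \<noteq> 0" using assms(1) by simp
  then have "(x - \<theta>*y) / y = ((x - \<theta>*y)*(a*(x + \<theta>*y))) / (y*(a*(x + \<theta>*y)))"
    by simp
  also have "\<dots> = m / (y*(a*(x + \<theta>*y)))"
    by (simp add: form[symmetric] algebra_simps)
  also have "y*(a*(x + \<theta>*y)) = a*y^2*(x/y + \<theta>)"
    using assms(5) by (simp add: field_simps power2_eq_square)
  finally show ?thesis using assms(5) by (simp add: diff_divide_distrib)
qed

lemma solution_ratio_tendsto: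
  fixes a b m \<theta> :: real and x y :: "nat \<Rightarrow> real"
  assumes "a > 0" "b > 0" "\<theta> = sqrt (b/a)"
    and "\<And>k. a*(x k)^2 - b*(y k)^2 = m" "\<And>k. y k > 0" "\<And>k. x k \<ge> 0"
    and "filterlim y at_top sequentially"
  shows "(\<lambda>k. x k / y k) \<longlonglongrightarrow> \<theta>"
proof -
  have "(x k / y k)^2 = \<theta>^2 + (m/a) * (inverse (y k))^2" for k
    using assms(1-3) assms(4,5)[of k] by (simp add: field_simps power2_eq_square)
  moreover have "(\<lambda>k. \<theta>^2 + (m/a) * (inverse (y k))^2) \<longlonglongrightarrow> \<theta>^2 + (m/a) * 0^2"
    by (intro tendsto_intros tendsto_inverse_0_at_top assms(7))
  ultimately have "(\<lambda>k. sqrt ((x k / y k)^2)) \<longlonglongrightarrow> sqrt (\<theta>^2)"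
    by (intro tendsto_real_sqrt) simp
  moreover have "sqrt ((x k / y k)^2) = x k / y k" for k
    using assms(5,6)[of k] by simp
  moreover have "\<theta> \<ge> 0" using assms(1-3) by simp
  then have "sqrt (\<theta>^2) = \<theta>" by simp
  ultimately show ?thesis by (simp only:)
qed

lemma solution_height_error_tendsto:
  fixes a b m \<theta> :: real and x y :: "nat \<Rightarrow> real"
  assumes "a > 0" "b > 0" "\<theta> = sqrt (b/a)" "\<theta> \<ge> 1"
    and "\<And>k. a*(x k)^2 - b*(y k)^2 = m" "\<And>k. y k > 0" "\<And>k. x k \<ge> 0"
    and "filterlim y at_top sequentially"
  shows "(\<lambda>k. (max (x k) (y k))^2 * \<bar>x k / y k - \<theta>\<bar>) \<longlonglongrightarrow> \<theta> * \<bar>m\<bar> / (2*a)"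
proof -
  define t where "t = (\<lambda>k. x k / y k)"
  have t_nonneg: "t k \<ge> 0" for k unfolding t_def using assms(6,7)[of k] by simp
  have "(max (x k) (y k))^2 * \<bar>x k / y k - \<theta>\<bar> = (max (t k) 1)^2 * \<bar>m\<bar> / (a * (t k + \<theta>))" for k
  proof -
    have "a*(t k + \<theta>) > 0"
      using assms(1,4) t_nonneg[of k] by simp
    then have "a*(y k)^2*(t k + \<theta>) > 0"
      using assms(6)[of k] by (metis mult.commute mult.left_commute mult_pos_pos zero_less_power)
    then have "\<bar>x k / y k - \<theta>\<bar> = \<bar>m\<bar> / (a*(y k)^2*(t k + \<theta>))"
      unfolding solution_ratio_error[OF assms(1-3,5-7)] by (simp add: abs_divide t_def)
    moreover have "max (x k) (y k) = y k * max (t k) 1"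
      unfolding t_def using assms(6)[of k] by (simp add: max_def field_simps)
    moreover have "(y * M)^2 * (z / (a*y^2*c)) = M^2 * z / (a*c)" if "y \<noteq> 0"
      for y M z c :: real
      using that by (cases "a*c = 0") (auto simp: field_simps power2_eq_square)
    ultimately show ?thesis using assms(6)[of k] by simp
  qed
  moreover have "(\<lambda>k. (max (t k) 1)^2 * \<bar>m\<bar> / (a * (t k + \<theta>)))
      \<longlonglongrightarrow> (max \<theta> 1)^2 * \<bar>m\<bar> / (a * (\<theta> + \<theta>))"
    unfolding t_def using assms(1,4)
    by (intro tendsto_intros solution_ratio_tendsto[OF assms(1-3,5-8)]) auto
  moreover have "(max \<theta> 1)^2 * \<bar>m\<bar> / (a * (\<theta> + \<theta>)) = \<theta> * \<bar>m\<bar> / (2*a)"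
    using assms(4) by (simp add: max_def field_simps power2_eq_square)
  ultimately show ?thesis by simp
qed

section \<open>Lower bounds for the counting function\<close>

lemma finite_bounded_height: "finite {z :: int \<times> int. real_of_int (max \<bar>fst z\<bar> \<bar>snd z\<bar>) \<le> B}"
proof (rule finite_subset)
  show "{z :: int \<times> int. real_of_int (max \<bar>fst z\<bar> \<bar>snd z\<bar>) \<le> B}
      \<subseteq> {-\<lceil>B\<rceil>..\<lceil>B\<rceil>} \<times> {-\<lceil>B\<rceil>..\<lceil>B\<rceil>}"
  proof
    fix z :: "int \<times> int"
    assume "z \<in> {z. real_of_int (max \<bar>fst z\<bar> \<bar>snd z\<bar>) \<le> B}"
    then have "real_of_int (max \<bar>fst z\<bar> \<bar>snd z\<bar>) \<le> real_of_int \<lceil>B\<rceil>"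
      using le_of_int_ceiling[of B] by simp linarith
    then have "max \<bar>fst z\<bar> \<bar>snd z\<bar> \<le> \<lceil>B\<rceil>" by (simp only: of_int_le_iff)
    then show "z \<in> {-\<lceil>B\<rceil>..\<lceil>B\<rceil>} \<times> {-\<lceil>B\<rceil>..\<lceil>B\<rceil>}"
      by (cases z) auto
  qed
qed simp

lemma delta_ge_term:
  assumes "\<And>t. f t \<ge> 0" and "v > 0" "coprime u v" "real_of_int (max \<bar>u\<bar> \<bar>v\<bar>) \<le> B"
  shows "f (B powr (1/r) * (u/v - \<theta>)) \<le> delta \<theta> B r f"
proof -
  let ?A = "{z :: int \<times> int. snd z > 0 \<and> coprime (fst z) (snd z) \<and> real_of_int (max \<bar>fst z\<bar> \<bar>snd z\<bar>) \<le> B}"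
  let ?g = "\<lambda>(u, v). f (B powr (1/r) * (real_of_int u / real_of_int v - \<theta>))"
  have "finite ?A" by (rule finite_subset[OF _ finite_bounded_height]) auto
  moreover have "(u, v) \<in> ?A" using assms(2-4) by simp
  ultimately have "?g (u, v) \<le> sum ?g ?A"
    by (intro member_le_sum) (auto intro: assms(1))
  then show ?thesis unfolding delta_def by simp
qed

lemma delta_ge_one_of_good_approximations:
  fixes \<theta> \<epsilon> \<eta> :: real and u v :: "nat \<Rightarrow> int"
  assumes "\<theta> \<notin> \<rat>" "\<eta> < \<epsilon>" "0 < \<epsilon>"
    and "\<And>k. v k > 0" "\<And>k. coprime (u k) (v k)"
    and "filterlim (\<lambda>k. real_of_int (v k)) at_top sequentially"
    and "eventually (\<lambda>k. (real_of_int (max \<bar>u k\<bar> \<bar>v k\<bar>))^2 * \<bar>u k / v k - \<theta>\<bar> \<le> \<epsilon>) sequentially"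
  shows "\<exists>B :: nat \<Rightarrow> real. (\<forall>n. B n > 0) \<and> filterlim B at_top sequentially
           \<and> (\<forall>n. delta \<theta> (B n) (1/2) (chi \<epsilon> \<eta>) \<ge> 1)"
proof -
  obtain N where good: "\<And>k. k \<ge> N \<Longrightarrow>
      (real_of_int (max \<bar>u k\<bar> \<bar>v k\<bar>))^2 * \<bar>u k / v k - \<theta>\<bar> \<le> \<epsilon>"
    using assms(7) by (auto simp: eventually_sequentially)
  define d where "d = (\<lambda>k. \<bar>u k / v k - \<theta>\<bar>)"
  define H where "H = (\<lambda>k. real_of_int (max \<bar>u k\<bar> \<bar>v k\<bar>))"
  define B where "B = (\<lambda>n. sqrt (\<epsilon> / d (n + N)))"
  have d_pos: "d k > 0" for k
  proof -
    have "real_of_int (u k) / real_of_int (v k) \<in> \<rat>" by simp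
    then show ?thesis using assms(1) unfolding d_def by auto
  qed
  have B_pos: "B n > 0" for n unfolding B_def using d_pos assms(3) by simp
  have B_sq: "(B n)^2 * d (n + N) = \<epsilon>" for n
    unfolding B_def using d_pos[of "n + N"] assms(3) by simp
  have height_le: "H (n + N) \<le> B n" for n
  proof -
    have "(H (n + N))^2 \<le> \<epsilon> / d (n + N)"
      using good[of "n + N"] d_pos[of "n + N"] unfolding H_def d_def by (simp add: field_simps)
    then have "sqrt ((H (n + N))^2) \<le> B n" unfolding B_def by (rule real_sqrt_le_mono)
    then show ?thesis unfolding H_def by simp
  qed
  have "filterlim (\<lambda>n. real_of_int (v (n + N))) at_top sequentially"
    by (rule filterlim_compose[OF assms(6) filterlim_add_const_nat_at_top])
  moreover have "\<forall>n. real_of_int (v (n + N)) \<le> B n"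
    using height_le unfolding H_def by (metis dual_order.trans max.cobounded2 of_int_le_iff abs_ge_self)
  ultimately have "filterlim B at_top sequentially"
    using filterlim_at_top_mono[of "\<lambda>n. real_of_int (v (n + N))"] always_eventually by blast
  moreover have "delta \<theta> (B n) (1/2) (chi \<epsilon> \<eta>) \<ge> 1" for n
  proof -
    have "\<bar>B n powr (1 / (1/2)) * (u (n + N) / v (n + N) - \<theta>)\<bar> = \<epsilon>"
      using B_pos[of n] B_sq[of n] unfolding d_def by (simp add: abs_mult)
    then have "chi \<epsilon> \<eta> (B n powr (1 / (1/2)) * (u (n + N) / v (n + N) - \<theta>)) = 1"
      using assms(2) by (simp add: chi_def)
    moreover have "chi \<epsilon> \<eta> (B n powr (1 / (1/2)) * (u (n + N) / v (n + N) - \<theta>))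
        \<le> delta \<theta> (B n) (1/2) (chi \<epsilon> \<eta>)"
      using height_le[of n] assms(4,5) unfolding H_def by (intro delta_ge_term) (auto simp: chi_def)
    ultimately show ?thesis by simp
  qed
  ultimately show ?thesis using B_pos by blast
qed

lemma solutions_eventually_good_approximations:
  fixes a b m :: int and \<theta> \<epsilon> :: real and X Y :: "nat \<Rightarrow> int"
  assumes "a > 0" "b > 0" "\<theta> = sqrt (b/a)" "\<theta> \<ge> 1" "\<theta> * \<bar>m\<bar> / (2*a) < \<epsilon>"
    and "\<And>k. X k \<ge> 0" "\<And>k. Y k > int k" "\<And>k. a*(X k)^2 - b*(Y k)^2 = m"
  shows "filterlim (\<lambda>k. real_of_int (Y k)) at_top sequentially"
    and "eventually (\<lambda>k. (real_of_int (max \<bar>X k\<bar> \<bar>Y k\<bar>))^2 * \<bar>X k / Y k - \<theta>\<bar> \<le> \<epsilon>) sequentially"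
proof -
  have Y_pos: "Y k > 0" for k using assms(7)[of k] by simp
  have form: "a * (real_of_int (X k))^2 - b * (real_of_int (Y k))^2 = m" for k
    using arg_cong[OF assms(8)[of k], of real_of_int] by simp
  have "\<forall>k. real k \<le> real_of_int (Y k)"
    using assms(7) by (metis less_imp_le of_int_le_iff of_int_of_nat_eq)
  then show Y_lim: "filterlim (\<lambda>k. real_of_int (Y k)) at_top sequentially"
    by (rule filterlim_at_top_mono[OF filterlim_real_sequentially always_eventually])
  have "(\<lambda>k. (max (real_of_int (X k)) (real_of_int (Y k)))^2 * \<bar>X k / Y k - \<theta>\<bar>)
      \<longlonglongrightarrow> \<theta> * \<bar>real_of_int m\<bar> / (2 * real_of_int a)"
    using assms(1-4,6) Y_pos form Y_lim
    by (intro solution_height_error_tendsto[of "real_of_int a" "real_of_int b"]) auto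
  then show "eventually (\<lambda>k. (real_of_int (max \<bar>X k\<bar> \<bar>Y k\<bar>))^2 * \<bar>X k / Y k - \<theta>\<bar> \<le> \<epsilon>) sequentially"
  proof (rule eventually_mono[OF order_tendstoD(2)])
    show "\<theta> * \<bar>real_of_int m\<bar> / (2 * real_of_int a) < \<epsilon>" using assms(5) by simp
    fix k
    have "real_of_int (max \<bar>X k\<bar> \<bar>Y k\<bar>) = max (real_of_int (X k)) (real_of_int (Y k))"
      using assms(6)[of k] Y_pos[of k] by simp
    then show "(max (real_of_int (X k)) (real_of_int (Y k)))^2 * \<bar>X k / Y k - \<theta>\<bar> < \<epsilon> \<Longrightarrow>
        (real_of_int (max \<bar>X k\<bar> \<bar>Y k\<bar>))^2 * \<bar>X k / Y k - \<theta>\<bar> \<le> \<epsilon>" by simp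
  qed
qed

theorem mainTheorem8:
  fixes a b :: int and \<theta> \<epsilon> \<eta> :: real
  assumes "a > 0" "b > 0" "coprime a b"
    and "\<theta> = sqrt (real_of_int b / real_of_int a)" "\<theta> > 1" "\<theta> \<notin> \<rat>"
    and "\<epsilon> > \<eta>" "\<eta> > 0"
    and "\<exists>m :: int. 2 * sqrt (real_of_int (a * b)) * \<theta> powr (-2) * \<eta> < \<bar>real_of_int m\<bar>
           \<and> \<bar>real_of_int m\<bar> < 2 * sqrt (real_of_int (a * b)) * \<theta> powr (-2) * \<epsilon>
           \<and> (\<exists>x y :: int. coprime x y \<and> a * x^2 - b * y^2 = m)"
  shows "\<exists>B :: nat \<Rightarrow> real. (\<forall>n. B n > 0) \<and> filterlim B at_top sequentially
           \<and> (\<forall>n \<ge> 1. delta \<theta> (B n) (1/2) (chi \<epsilon> \<eta>) \<ge> 1)"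
proof -
  obtain m x y :: int
    where upper: "\<bar>real_of_int m\<bar> < 2 * sqrt (real_of_int (a * b)) * \<theta> powr (-2) * \<epsilon>"
      and "coprime x y" "a * x^2 - b * y^2 = m"
    using assms(9) by blast
  have "\<theta> > 0" "real_of_int a > 0" "\<epsilon> > 0" using assms(1,5,7,8) by simp_all
  have "\<theta>^2 = b / a" using assms(1,2,4) by simp
  then have "(a * \<theta>)^2 = real_of_int (a * b)"
    using \<open>a > 0\<close> by (simp add: power_mult_distrib field_simps power2_eq_square)
  then have sqrt_ab: "sqrt (real_of_int (a * b)) = a * \<theta>"
    using \<open>\<theta> > 0\<close> \<open>a > 0\<close> by (intro real_sqrt_unique) auto
  have "a * \<theta> / a = \<theta>" using \<open>a > 0\<close> by simp
  then have "sqrt (real_of_int (a * b)) \<notin> \<rat>"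
    using assms(6) unfolding sqrt_ab by (metis Rats_divide Rats_of_int)
  then obtain X Y :: "nat \<Rightarrow> int" where sols: "\<And>k. X k \<ge> 0" "\<And>k. Y k > int k"
      "\<And>k. coprime (X k) (Y k)" "\<And>k. a * (X k)^2 - b * (Y k)^2 = m"
    using primitive_solutions_unbounded[OF assms(1,2) _ \<open>coprime x y\<close> \<open>a * x^2 - b * y^2 = m\<close>]
    by blast
  have "\<theta> * \<bar>m\<bar> / (2*a) < \<epsilon>"
    using upper \<open>\<theta> > 0\<close> \<open>a > 0\<close> unfolding sqrt_ab
    by (simp add: powr_minus field_simps power2_eq_square)
  note good = solutions_eventually_good_approximations[OF assms(1,2,4) less_imp_le[OF assms(5)]
      this sols(1,2,4)]
  have "Y k > 0" for k using sols(2)[of k] by simp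
  then have "\<exists>B :: nat \<Rightarrow> real. (\<forall>n. B n > 0) \<and> filterlim B at_top sequentially
      \<and> (\<forall>n. delta \<theta> (B n) (1/2) (chi \<epsilon> \<eta>) \<ge> 1)"
    by (rule delta_ge_one_of_good_approximations[OF assms(6,7) \<open>\<epsilon> > 0\<close> _ sols(3) good])
  then show ?thesis by blast
qed

end
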